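(* Let $f_{1,\infty}=\{f_n\}_{n=1}^\infty$ be a periodic sequence of continuous maps $f_n:[0,1]\to[0,1]$ (i.e. there is $k\in\mathbb{N}$ with $f_{j+kl}=f_j$ for all $l\in\mathbb{N}$, $1\le j\le k$). Then the following are equivalent for the non-autonomous system $([0,1],f_{1,\infty})$: (1) it is strongly multi-sensitive; (2) it is $\mathcal{N}$-sensitive; (3) it is multi-sensitive; (4) it is sensitive.
   Context: Use the usual metric on $[0,1]$. Write $f_i^n=f_{n+i-1}\circ\cdots\circ f_i$, $f_i^0=\mathrm{id}$, and $f_{1,\infty}^{[k]}=\{f^k_{k(n-1)+1}\}_{n=1}^\infty$ (its $n$-fold composition from index $1$ is $f_1^{kn}$). For $V\subseteq X$, $\delta>0$: $N_{f_{1,\infty}}(V,\delta)=\{n\in\mathbb{N}:\exists u,v\in V,\ d(f_1^n(u),f_1^n(v))>\delta\}$. The system is sensitive if there is $\delta>0$ with $N_{f_{1,\infty}}(V,\delta)\ne\varnothing$ for every nonempty open $V$; multi-sensitive if there is $\delta>0$ with $\bigcap_{i=1}^m N_{f_{1,\infty}}(V_i,\delta)\neq\varnothing$ for every finite collection of nonempty open $V_1,\dots,V_m$. For $\mathbf{v}=(v_1,\dots,v_r)\in\mathbb{N}^r$, it is multi-sensitive with respect to $\mathbf{v}$ if there is $\delta>0$ such that $\bigcap_{i=1}^r N_{f_{1,\infty}^{[v_i]}}(U_i,\delta)\ne\varnothing$ for all nonempty open $U_1,\dots,U_r$; $\mathcal{N}$-sensitive if multi-sensitive with respect to $(1,\dots,n)$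 for every $n$; strongly multi-sensitive if multi-sensitive with respect to every vector in $\mathbb{N}^r$ for every $r$. *)

theory Defs
  imports "HOL-Analysis.Analysis"
begin

text \<open>A non-autonomous system on [0,1] is a sequence f :: nat => real => real,
  indexed from 1 (the value f 0 is irrelevant).\<close>

fun ncomp :: "(nat \<Rightarrow> real \<Rightarrow> real) \<Rightarrow> nat \<Rightarrow> nat \<Rightarrow> real \<Rightarrow> real" where
  "ncomp f i 0 = id"
| "ncomp f i (Suc n) = f (i + n) \<circ> ncomp f i n"

definition block :: "(nat \<Rightarrow> real \<Rightarrow> real) \<Rightarrow> nat \<Rightarrow> nat \<Rightarrow> real \<Rightarrow> real" where
  "block f k = (\<lambda>n. ncomp f (k * (n - 1) + 1) k)"

definition Nset :: "(nat \<Rightarrow> real \<Rightarrow> real) \<Rightarrow> real set \<Rightarrow> real \<Rightarrow> nat set" where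
  "Nset f V \<delta> = {n. n \<ge> 1 \<and> (\<exists>u\<in>V. \<exists>v\<in>V. dist (ncomp f 1 n u) (ncomp f 1 n v) > \<delta>)}"

definition nopen01 :: "real set \<Rightarrow> bool" where
  "nopen01 V \<longleftrightarrow> openin (top_of_set {0..1}) V \<and> V \<noteq> {}"

definition sensitive :: "(nat \<Rightarrow> real \<Rightarrow> real) \<Rightarrow> bool" where
  "sensitive f \<longleftrightarrow> (\<exists>\<delta>>0. \<forall>V. nopen01 V \<longrightarrow> Nset f V \<delta> \<noteq> {})"

definition multi_sensitive :: "(nat \<Rightarrow> real \<Rightarrow> real) \<Rightarrow> bool" where
  "multi_sensitive f \<longleftrightarrow> (\<exists>\<delta>>0. \<forall>(m::nat) (V::nat \<Rightarrow> real set). m \<ge> 1 \<longrightarrow> (\<forall>i<m. nopen01 (V i)) \<longrightarrow>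
      (\<Inter>i<m. Nset f (V i) \<delta>) \<noteq> {})"

definition multi_sensitive_wrt :: "(nat \<Rightarrow> real \<Rightarrow> real) \<Rightarrow> nat \<Rightarrow> (nat \<Rightarrow> nat) \<Rightarrow> bool" where
  "multi_sensitive_wrt f r v \<longleftrightarrow> (\<exists>\<delta>>0. \<forall>U::nat \<Rightarrow> real set. (\<forall>i<r. nopen01 (U i)) \<longrightarrow>
      (\<Inter>i<r. Nset (block f (v i)) (U i) \<delta>) \<noteq> {})"

definition N_sensitive :: "(nat \<Rightarrow> real \<Rightarrow> real) \<Rightarrow> bool" where
  "N_sensitive f \<longleftrightarrow> (\<forall>n\<ge>1. multi_sensitive_wrt f n (\<lambda>i. i + 1))"

definition strongly_multi_sensitive :: "(nat \<Rightarrow> real \<Rightarrow> real) \<Rightarrow> bool" where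
  "strongly_multi_sensitive f \<longleftrightarrow>
     (\<forall>r\<ge>1. \<forall>v. (\<forall>i<r. v i \<ge> 1) \<longrightarrow> multi_sensitive_wrt f r v)"

end

theory Submission
  imports Defs
begin

text \<open>
  Sensitivity of a periodic system of interval maps improves to cofinite sensitivity: for some
  \<open>\<eta> > 0\<close> and every open \<open>U\<close>, points of \<open>U\<close> are separated by more than \<open>\<eta>\<close> under
  \<open>f_1^n\<close> for all large \<open>n\<close>. Separation at all large times is inherited by every block
  system and by any finitely many open sets at once, which gives the three stronger notions;
  each of them specialises back to sensitivity.

  For cofinite sensitivity with period \<open>k\<close>, cut \<open>[0,1]\<close> into cells of length \<open>e\<close>.
  Equicontinuity of the finitely many maps \<open>f_1^s\<close>, \<open>s < k\<close>, turns sensitivity into expansion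
  at multiples of the period: every open set contains an interval whose image under some
  \<open>f_1^(kq)\<close> has length at least \<open>2e\<close> and so, being connected, contains a whole cell.
  Applied to the cells themselves this yields a bound \<open>M\<close> such that every cell covers some
  cell again within \<open>M\<close> periods; hence once \<open>f_1^t(U)\<close> contains a cell, it does so again
  after gaps of at most \<open>Mk\<close>. No \<open>f_1^m\<close> is constant on a cell (sensitivity again), so a
  single \<open>\<eta>\<close> works for every cell and every \<open>m < Mk\<close>, which bridges the gaps.
\<close>

lemma finite_ex_pos_uniform:
  fixes P :: "'a \<Rightarrow> real \<Rightarrow> bool"
  assumes "finite A"
    and pos: "\<And>a. a \<in> A \<Longrightarrow> \<exists>e>0. P a e"
    and mono: "\<And>a e e'. P a e \<Longrightarrow> 0 < e' \<Longrightarrow> e' \<le> e \<Longrightarrow> P a e'"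
  shows "\<exists>e>0. \<forall>a\<in>A. P a e"
proof -
  have "\<forall>a\<in>A. \<forall>\<^sub>F e in at_right 0. P a e"
  proof
    fix a assume "a \<in> A"
    then obtain e where "0 < e" "P a e" using pos by blast
    then show "\<forall>\<^sub>F e' in at_right 0. P a e'"
      unfolding eventually_at_right_field using mono by (auto intro!: exI[of _ e])
  qed
  then have "\<forall>\<^sub>F e in at_right 0. 0 < e \<and> (\<forall>a\<in>A. P a e)"
    by (intro eventually_conj eventually_at_right_less eventually_ball_finite assms(1))
  then show ?thesis
    by (rule eventually_happens'[OF trivial_limit_at_right_real])
qed

lemma bounded_gaps_cover:
  fixes R :: "nat \<Rightarrow> bool"
  assumes "R t\<^sub>0"
    and gap: "\<And>t. R t \<Longrightarrow> \<exists>t'. R t' \<and> t < t' \<and> t' \<le> t + D"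
    and "t\<^sub>0 \<le> n"
  shows "\<exists>t. R t \<and> t \<le> n \<and> n < t + D"
  using \<open>t\<^sub>0 \<le> n\<close>
proof (induction n rule: dec_induct)
  case base
  show ?case using gap[OF \<open>R t\<^sub>0\<close>] \<open>R t\<^sub>0\<close> by auto
next
  case (step n)
  then obtain t where t: "R t" "t \<le> n" "n < t + D" by blast
  show ?case
  proof (cases "Suc n < t + D")
    case True
    then show ?thesis using t by auto
  next
    case False
    with t have "Suc n = t + D" by simp
    obtain t' where "R t'" "t < t'" "t' \<le> t + D" using gap[OF \<open>R t\<close>] by blast
    with \<open>Suc n = t + D\<close> show ?thesis by (intro exI[of _ t']) auto
  qed
qed

lemma ncomp_add: "ncomp f i (a + b) = ncomp f (i + a) b \<circ> ncomp f i a"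
  by (induction b) (auto simp: add.assoc)

lemma ncomp_block: "ncomp (block f c) 1 n = ncomp f 1 (c * n)"
proof (induction n)
  case (Suc n)
  have "ncomp (block f c) 1 (Suc n) = ncomp f (1 + c * n) c \<circ> ncomp f 1 (c * n)"
    using Suc by (simp add: block_def)
  also have "\<dots> = ncomp f 1 (c * n + c)"
    by (rule ncomp_add[symmetric])
  finally show ?case by (simp add: add.commute)
qed simp

lemma Nset_block_one: "Nset (block f 1) = Nset f"
  by (intro ext) (simp only: Nset_def ncomp_block mult_1)

lemma Nset_blockI:
  assumes "1 \<le> n" "c * n \<in> Nset f V \<delta>"
  shows "n \<in> Nset (block f c) V \<delta>"
  using assms unfolding Nset_def ncomp_block by simp

section \<open>Cofinite sensitivity\<close>

definition cofinitely_sensitive :: "(nat \<Rightarrow> real \<Rightarrow> real) \<Rightarrow> bool" where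
  "cofinitely_sensitive f \<longleftrightarrow>
     (\<exists>\<delta>>0. \<forall>V. nopen01 V \<longrightarrow> (\<forall>\<^sub>F n in sequentially. n \<in> Nset f V \<delta>))"

lemma Inter_Nset_blocks_nonempty:
  assumes cof: "\<And>V. nopen01 V \<Longrightarrow> \<forall>\<^sub>F n in sequentially. n \<in> Nset f V \<delta>"
    and v: "\<forall>i<r. 1 \<le> v i" and U: "\<forall>i<r. nopen01 (U i)"
  shows "(\<Inter>i<(r::nat). Nset (block f (v i)) (U i) \<delta>) \<noteq> {}"
proof -
  have "\<forall>\<^sub>F n in sequentially. \<forall>i\<in>{..<r}. n \<in> Nset f (U i) \<delta>"
    using U cof by (intro eventually_ball_finite) auto
  then obtain N where N: "\<And>n i. N \<le> n \<Longrightarrow> i < r \<Longrightarrow> n \<in> Nset f (U i) \<delta>"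
    unfolding eventually_sequentially by blast
  have "Suc N \<in> Nset (block f (v i)) (U i) \<delta>" if "i < r" for i
  proof (rule Nset_blockI)
    have "Suc N \<le> v i * Suc N"
      using mult_le_mono1[of 1 "v i" "Suc N"] v that by simp
    then show "v i * Suc N \<in> Nset f (U i) \<delta>"
      using N that by simp
  qed simp
  then show ?thesis
    by blast
qed

lemma cofinitely_sensitive_imp_strongly_multi_sensitive:
  assumes "cofinitely_sensitive f"
  shows "strongly_multi_sensitive f"
proof -
  obtain \<delta> where "0 < \<delta>" and cof: "\<And>V. nopen01 V \<Longrightarrow> \<forall>\<^sub>F n in sequentially. n \<in> Nset f V \<delta>"
    using assms unfolding cofinitely_sensitive_def by blast
  then show ?thesis
    unfolding strongly_multi_sensitive_def multi_sensitive_wrt_def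
    using Inter_Nset_blocks_nonempty[OF cof] by blast
qed

lemma cofinitely_sensitive_imp_N_sensitive:
  assumes "cofinitely_sensitive f"
  shows "N_sensitive f"
proof -
  obtain \<delta> where "0 < \<delta>" and cof: "\<And>V. nopen01 V \<Longrightarrow> \<forall>\<^sub>F n in sequentially. n \<in> Nset f V \<delta>"
    using assms unfolding cofinitely_sensitive_def by blast
  have "(\<Inter>i<r. Nset (block f (i + 1)) (U i) \<delta>) \<noteq> {}" if "\<forall>i<r. nopen01 (U i)" for r :: nat and U
    using Inter_Nset_blocks_nonempty[OF cof, of r "\<lambda>i. i + 1" U] that by simp
  with \<open>0 < \<delta>\<close> show ?thesis
    unfolding N_sensitive_def multi_sensitive_wrt_def by blast
qed

lemma cofinitely_sensitive_imp_multi_sensitive: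
  assumes "cofinitely_sensitive f"
  shows "multi_sensitive f"
proof -
  obtain \<delta> where "0 < \<delta>" and cof: "\<And>V. nopen01 V \<Longrightarrow> \<forall>\<^sub>F n in sequentially. n \<in> Nset f V \<delta>"
    using assms unfolding cofinitely_sensitive_def by blast
  have "(\<Inter>i<m. Nset f (V i) \<delta>) \<noteq> {}" if "\<forall>i<m. nopen01 (V i)" for m :: nat and V
    using Inter_Nset_blocks_nonempty[OF cof, of m "\<lambda>_. 1" V] that
    by (simp only: Nset_block_one order_refl simp_thms)
  with \<open>0 < \<delta>\<close> show ?thesis
    unfolding multi_sensitive_def by blast
qed

lemma multi_sensitive_wrt_imp_sensitive:
  assumes "multi_sensitive_wrt f r v" "1 \<le> r" "v 0 = 1"
  shows "sensitive f"
proof -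
  obtain \<delta> where "0 < \<delta>"
    and \<delta>: "\<And>U. \<forall>i<r. nopen01 (U i) \<Longrightarrow> (\<Inter>i<r. Nset (block f (v i)) (U i) \<delta>) \<noteq> {}"
    using assms(1) unfolding multi_sensitive_wrt_def by blast
  have "Nset f V \<delta> \<noteq> {}" if "nopen01 V" for V
  proof -
    have "(\<Inter>i<r. Nset (block f (v i)) V \<delta>) \<subseteq> Nset (block f (v 0)) V \<delta>"
      using assms(2) by (intro INT_lower) auto
    moreover have "Nset (block f (v 0)) V \<delta> = Nset f V \<delta>"
      by (simp only: assms(3) Nset_block_one)
    ultimately show ?thesis
      using \<delta>[of "\<lambda>_. V"] that by auto
  qed
  with \<open>0 < \<delta>\<close> show ?thesis
    unfolding sensitive_def by blast
qed

lemma strongly_multi_sensitive_imp_sensitive: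
  "strongly_multi_sensitive f \<Longrightarrow> sensitive f"
  unfolding strongly_multi_sensitive_def
  by (rule multi_sensitive_wrt_imp_sensitive[of f 1 "\<lambda>_. 1"]) auto

lemma N_sensitive_imp_sensitive: "N_sensitive f \<Longrightarrow> sensitive f"
  unfolding N_sensitive_def
  by (rule multi_sensitive_wrt_imp_sensitive[of f 1 "\<lambda>i. i + 1"]) auto

lemma multi_sensitive_imp_sensitive:
  assumes "multi_sensitive f"
  shows "sensitive f"
proof -
  obtain \<delta> where "0 < \<delta>" and \<delta>: "\<And>(m::nat) V. 1 \<le> m \<Longrightarrow> \<forall>i<m. nopen01 (V i) \<Longrightarrow>
      (\<Inter>i<m. Nset f (V i) \<delta>) \<noteq> {}"
    using assms unfolding multi_sensitive_def by blast
  have "Nset f V \<delta> \<noteq> {}" if "nopen01 V" for V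
    using \<delta>[of 1 "\<lambda>_. V"] that by (simp add: lessThan_Suc)
  with \<open>0 < \<delta>\<close> show ?thesis
    unfolding sensitive_def by blast
qed

section \<open>Open sets and grid cells of the unit interval\<close>

lemma nopen01_subset: "nopen01 V \<Longrightarrow> V \<subseteq> {0..1}"
  unfolding nopen01_def by (meson openin_imp_subset topspace_euclidean_subtopology)

lemma nopen01_contains_ball:
  assumes "nopen01 V" "c \<in> V"
  obtains r where "0 < r" "ball c r \<inter> {0..1} \<subseteq> V"
  using assms unfolding nopen01_def openin_contains_ball by blast

lemma nopen01_ball:
  assumes "c \<in> {0..1}" "0 < r"
  shows "nopen01 (ball c r \<inter> {0..1})"
proof -
  have "openin (top_of_set {0..1}) ({0..1} \<inter> ball c r)"
    by (simp add: openin_open_Int)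
  moreover have "c \<in> ball c r \<inter> {0..1}"
    using assms by simp
  ultimately show ?thesis
    unfolding nopen01_def by (metis Int_commute empty_iff)
qed

lemma nopen01_open_interval:
  assumes "0 \<le> a" "a < b" "b \<le> 1"
  shows "nopen01 {a<..<b}"
proof -
  have "openin (top_of_set {0..1}) ({0..1} \<inter> {a<..<b})"
    by (simp add: openin_open_Int)
  moreover have "{0..1} \<inter> {a<..<b} = {a<..<b}"
    using assms by auto
  ultimately show ?thesis
    unfolding nopen01_def using assms(2) by simp
qed

definition cell :: "real \<Rightarrow> nat \<Rightarrow> real set" where
  "cell e j = {real j * e..(real j + 1) * e}"

definition unit_cells :: "real \<Rightarrow> nat set" where
  "unit_cells e = {j. (real j + 1) * e \<le> 1}"

lemma finite_unit_cells:
  assumes "0 < e"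
  shows "finite (unit_cells e)"
proof (rule finite_subset)
  show "unit_cells e \<subseteq> {..nat \<lceil>1 / e\<rceil>}"
  proof
    fix j assume "j \<in> unit_cells e"
    then have "real j \<le> 1 / e"
      using assms by (simp add: unit_cells_def field_simps)
    then show "j \<in> {..nat \<lceil>1 / e\<rceil>}"
      by (simp add: le_nat_iff) linarith
  qed
qed simp

lemma nopen01_cell_interior:
  assumes "0 < e" "j \<in> unit_cells e"
  shows "nopen01 {real j * e<..<(real j + 1) * e}"
  using assms by (intro nopen01_open_interval) (auto simp: unit_cells_def field_simps)

lemma cell_subset_interval:
  fixes e lo hi :: real
  assumes "0 < e" "0 \<le> lo" "lo + 2 * e \<le> hi"
  obtains j where "cell e j \<subseteq> {lo..hi}"
proof
  define j where "j = nat \<lceil>lo / e\<rceil>"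
  have "real j = of_int \<lceil>lo / e\<rceil>"
    using assms by (simp add: j_def)
  then have "lo / e \<le> real j" "real j < lo / e + 1"
    by linarith+
  then have "lo \<le> real j * e" "real j * e < lo + e"
    using assms(1) by (simp_all add: field_simps)
  then show "cell e j \<subseteq> {lo..hi}"
    using assms by (auto simp: cell_def algebra_simps)
qed

section \<open>Continuous interval systems\<close>

locale interval_system =
  fixes f :: "nat \<Rightarrow> real \<Rightarrow> real"
  assumes continuous: "\<And>n. 1 \<le> n \<Longrightarrow> continuous_on {0..1} (f n)"
    and maps_unit: "\<And>n. 1 \<le> n \<Longrightarrow> f n ` {0..1} \<subseteq> {0..1}"
begin

lemma ncomp_in_unit: "1 \<le> i \<Longrightarrow> x \<in> {0..1} \<Longrightarrow> ncomp f i n x \<in> {0..1}"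
proof (induction n)
  case (Suc n)
  then show ?case
    using maps_unit[of "i + n"] by (auto simp: image_subset_iff)
qed simp

lemma continuous_on_ncomp: "1 \<le> i \<Longrightarrow> continuous_on {0..1} (ncomp f i n)"
proof (induction n)
  case (Suc n)
  have "ncomp f i n ` {0..1} \<subseteq> {0..1}"
    using ncomp_in_unit Suc.prems by blast
  then have "continuous_on (ncomp f i n ` {0..1}) (f (i + n))"
    using continuous_on_subset continuous Suc.prems by (metis le_add1 order.trans)
  then show ?case
    using continuous_on_compose[OF Suc.IH[OF Suc.prems]] by simp
qed simp

lemma ncomp_equicontinuous:
  assumes "0 < \<epsilon>"
  shows "\<exists>d>0. \<forall>t<m. \<forall>x\<in>{0..1}. \<forall>y\<in>{0..1}.
           dist x y < d \<longrightarrow> dist (ncomp f 1 t x) (ncomp f 1 t y) < \<epsilon>"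
proof -
  have "\<exists>d>0. \<forall>t\<in>{..<m}. \<forall>x\<in>{0..1}. \<forall>y\<in>{0..1}.
          dist x y < d \<longrightarrow> dist (ncomp f 1 t x) (ncomp f 1 t y) < \<epsilon>"
  proof (rule finite_ex_pos_uniform)
    fix t
    have "uniformly_continuous_on {0..1} (ncomp f 1 t)"
      by (simp add: compact_uniformly_continuous continuous_on_ncomp)
    then show "\<exists>d>0. \<forall>x\<in>{0..1}. \<forall>y\<in>{0..1}.
                 dist x y < d \<longrightarrow> dist (ncomp f 1 t x) (ncomp f 1 t y) < \<epsilon>"
      unfolding uniformly_continuous_on_def using assms by blast
  qed auto
  then show ?thesis by (simp add: lessThan_def)
qed

lemma image_covers_unit_cell:
  assumes "0 < e" "u \<le> v" "{u..v} \<subseteq> {0..1}"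
    and "2 * e \<le> dist (ncomp f 1 t u) (ncomp f 1 t v)"
  shows "\<exists>j\<in>unit_cells e. cell e j \<subseteq> ncomp f 1 t ` {u..v}"
proof -
  define lo hi where "lo = min (ncomp f 1 t u) (ncomp f 1 t v)"
    and "hi = max (ncomp f 1 t u) (ncomp f 1 t v)"
  have "continuous_on {u..v} (ncomp f 1 t)"
    using continuous_on_subset[OF continuous_on_ncomp assms(3)] by simp
  then have "connected (ncomp f 1 t ` {u..v})"
    by (simp add: connected_continuous_image)
  moreover have "lo \<in> ncomp f 1 t ` {u..v}" "hi \<in> ncomp f 1 t ` {u..v}"
    using assms(2) by (auto simp: lo_def hi_def min_def max_def)
  ultimately have image: "{lo..hi} \<subseteq> ncomp f 1 t ` {u..v}"
    by (rule connected_contains_Icc)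
  have "u \<in> {0..1}" "v \<in> {0..1}"
    using assms(2,3) by auto
  then have "0 \<le> lo" "hi \<le> 1"
    unfolding lo_def hi_def using ncomp_in_unit by auto
  moreover have "lo + 2 * e \<le> hi"
    using assms(4) by (auto simp: lo_def hi_def dist_real_def)
  ultimately obtain j where j: "cell e j \<subseteq> {lo..hi}"
    using cell_subset_interval assms(1) by metis
  then have "(real j + 1) * e \<le> 1"
    using \<open>hi \<le> 1\<close> assms(1) by (auto simp: cell_def)
  then show ?thesis
    using j image by (auto simp: unit_cells_def)
qed

end

locale sensitive_interval_system = interval_system +
  fixes \<delta> :: real
  assumes sensitivity_pos: "0 < \<delta>"
    and sensitivity: "\<And>V. nopen01 V \<Longrightarrow> Nset f V \<delta> \<noteq> {}"
begin

text \<open>Times below \<open>m\<close> cannot separate points of a sufficiently small ball, by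
  equicontinuity; so sensitivity on such a ball is witnessed at a time \<open>n \<ge> m\<close>.\<close>

lemma sensitive_at_late_times:
  assumes "nopen01 V"
  shows "\<exists>n\<ge>m. \<exists>u v. u \<le> v \<and> {u..v} \<subseteq> V \<and> \<delta> < dist (ncomp f 1 n u) (ncomp f 1 n v)"
proof -
  obtain c where "c \<in> V"
    using assms by (auto simp: nopen01_def)
  then obtain r where r: "0 < r" "ball c r \<inter> {0..1} \<subseteq> V"
    using assms nopen01_contains_ball by blast
  obtain d where d: "0 < d"
    "\<And>t x y. t < m \<Longrightarrow> x \<in> {0..1} \<Longrightarrow> y \<in> {0..1} \<Longrightarrow> dist x y < d \<Longrightarrow>
       dist (ncomp f 1 t x) (ncomp f 1 t y) < \<delta>"
    using ncomp_equicontinuous[OF sensitivity_pos, of m] by auto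
  define W where "W = ball c (min r (d / 2)) \<inter> {0..1}"
  have "nopen01 W"
    unfolding W_def using \<open>c \<in> V\<close> nopen01_subset[OF assms] r(1) d(1)
    by (intro nopen01_ball) auto
  then obtain n where "n \<in> Nset f W \<delta>"
    using sensitivity by blast
  then obtain u v where uv: "u \<in> W" "v \<in> W" "\<delta> < dist (ncomp f 1 n u) (ncomp f 1 n v)"
    unfolding Nset_def by blast
  have "u \<in> {0..1}" "v \<in> {0..1}"
    using uv(1,2) by (simp_all add: W_def)
  have "dist c u < d / 2" "dist c v < d / 2"
    using uv(1,2) by (simp_all add: W_def)
  then have "dist u v < d"
    using dist_triangle[of u v c] by (simp add: dist_commute)
  have "m \<le> n"
  proof (rule ccontr)
    assume "\<not> m \<le> n"
    then have "dist (ncomp f 1 n u) (ncomp f 1 n v) < \<delta>"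
      using d(2) \<open>u \<in> {0..1}\<close> \<open>v \<in> {0..1}\<close> \<open>dist u v < d\<close> by simp
    with uv(3) show False by simp
  qed
  have "convex W"
    unfolding W_def by (simp add: convex_Int)
  moreover have "W \<subseteq> V"
    using r(2) by (auto simp: W_def)
  ultimately have segment: "closed_segment u v \<subseteq> V"
    using closed_segment_subset[OF uv(1,2)] by blast
  show ?thesis
  proof (cases "u \<le> v")
    case True
    then show ?thesis
      using segment \<open>m \<le> n\<close> uv(3)
      by (intro exI[of _ n] conjI exI[of _ u] exI[of _ v]) (simp_all add: closed_segment_eq_real_ivl1)
  next
    case False
    then show ?thesis
      using segment \<open>m \<le> n\<close> uv(3)
      by (intro exI[of _ n] conjI exI[of _ v] exI[of _ u])
        (simp_all add: closed_segment_eq_real_ivl dist_commute)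
  qed
qed

lemma ncomp_nonconstant:
  assumes "nopen01 V"
  shows "\<exists>x\<in>V. \<exists>y\<in>V. ncomp f 1 m x \<noteq> ncomp f 1 m y"
proof -
  obtain n u v where "m \<le> n" "u \<le> v" "{u..v} \<subseteq> V"
    and sep: "\<delta> < dist (ncomp f 1 n u) (ncomp f 1 n v)"
    using sensitive_at_late_times[OF assms] by blast
  have split: "ncomp f 1 n x = ncomp f (1 + m) (n - m) (ncomp f 1 m x)" for x
    using ncomp_add[of f 1 m "n - m"] \<open>m \<le> n\<close> by simp
  have "ncomp f 1 m u \<noteq> ncomp f 1 m v"
  proof
    assume "ncomp f 1 m u = ncomp f 1 m v"
    then have "ncomp f 1 n u = ncomp f 1 n v"
      by (simp only: split)
    with sep sensitivity_pos show False by simp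
  qed
  moreover have "u \<in> V" "v \<in> V"
    using \<open>u \<le> v\<close> \<open>{u..v} \<subseteq> V\<close> by auto
  ultimately show ?thesis by blast
qed

lemma cells_uniformly_spread:
  assumes "0 < e"
  shows "\<exists>\<eta>>0. \<forall>j\<in>unit_cells e. \<forall>m<L.
           \<exists>x\<in>cell e j. \<exists>y\<in>cell e j. \<eta> < dist (ncomp f 1 m x) (ncomp f 1 m y)"
proof -
  have "\<exists>\<eta>>0. \<forall>p\<in>unit_cells e \<times> {..<L}. \<exists>x\<in>cell e (fst p). \<exists>y\<in>cell e (fst p).
          \<eta> < dist (ncomp f 1 (snd p) x) (ncomp f 1 (snd p) y)"
  proof (rule finite_ex_pos_uniform)
    show "finite (unit_cells e \<times> {..<L})"
      using finite_unit_cells[OF assms] by simp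
  next
    fix p assume "p \<in> unit_cells e \<times> {..<L}"
    then have "nopen01 {real (fst p) * e<..<(real (fst p) + 1) * e}"
      using nopen01_cell_interior[OF assms] by auto
    moreover have "{real (fst p) * e<..<(real (fst p) + 1) * e} \<subseteq> cell e (fst p)"
      by (auto simp: cell_def)
    ultimately obtain x y where xy: "x \<in> cell e (fst p)" "y \<in> cell e (fst p)"
      "ncomp f 1 (snd p) x \<noteq> ncomp f 1 (snd p) y"
      using ncomp_nonconstant by blast
    then show "\<exists>\<eta>>0. \<exists>x\<in>cell e (fst p). \<exists>y\<in>cell e (fst p).
                 \<eta> < dist (ncomp f 1 (snd p) x) (ncomp f 1 (snd p) y)"
      by (intro exI[of _ "dist (ncomp f 1 (snd p) x) (ncomp f 1 (snd p) y) / 2"]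
          conjI bexI[of _ x] bexI[of _ y]) auto
  qed (meson order_le_less_trans)
  then show ?thesis
    by fastforce
qed

end

section \<open>Periodic interval systems\<close>

locale periodic_interval_system = interval_system +
  fixes k :: nat
  assumes period_pos: "1 \<le> k"
    and periodic: "\<forall>l j. 1 \<le> j \<and> j \<le> k \<longrightarrow> f (j + k * l) = f j"
begin

lemma f_periodic:
  assumes "1 \<le> j"
  shows "f (j + k * l) = f j"
proof -
  define r q where "r = (j - 1) mod k + 1" and "q = (j - 1) div k"
  have j: "j = r + k * q"
    using assms mod_mult_div_eq[of "j - 1" k] by (simp add: r_def q_def)
  have "1 \<le> r" "r \<le> k"
    using period_pos by (auto simp: r_def Suc_le_eq)
  then have "f (r + k * (q + l)) = f r" "f (r + k * q) = f r"
    using periodic by blast+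
  then show ?thesis
    unfolding j by (simp add: algebra_simps)
qed

lemma ncomp_period_shift: "ncomp f (k * q + 1) m = ncomp f 1 m"
proof (induction m)
  case (Suc m)
  have "f (k * q + 1 + m) = f (1 + m)"
    using f_periodic[of "1 + m" q] by (simp add: algebra_simps)
  with Suc show ?case by simp
qed simp

lemma ncomp_period_split: "ncomp f 1 (k * q + m) = ncomp f 1 m \<circ> ncomp f 1 (k * q)"
  using ncomp_add[of f 1 "k * q" m] ncomp_period_shift[of q m] by (simp add: add.commute)

definition expands_by :: "real \<Rightarrow> bool" where
  "expands_by d \<longleftrightarrow> (\<forall>V. nopen01 V \<longrightarrow> (\<exists>q\<ge>1. \<exists>u v. u \<le> v \<and> {u..v} \<subseteq> V \<and>
      d \<le> dist (ncomp f 1 (k * q) u) (ncomp f 1 (k * q) v)))"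

lemma expands_by_covers_unit_cell:
  assumes "0 < e" "expands_by (2 * e)" "nopen01 V"
  shows "\<exists>q\<ge>1. \<exists>j\<in>unit_cells e. cell e j \<subseteq> ncomp f 1 (k * q) ` V"
proof -
  obtain q u v where q: "1 \<le> q" "u \<le> v" "{u..v} \<subseteq> V"
    and sep: "2 * e \<le> dist (ncomp f 1 (k * q) u) (ncomp f 1 (k * q) v)"
    using assms(2,3) unfolding expands_by_def by blast
  moreover have "{u..v} \<subseteq> {0..1}"
    using q(3) nopen01_subset[OF assms(3)] by blast
  ultimately obtain j where "j \<in> unit_cells e" "cell e j \<subseteq> ncomp f 1 (k * q) ` {u..v}"
    using image_covers_unit_cell[OF assms(1)] by blast
  moreover have "ncomp f 1 (k * q) ` {u..v} \<subseteq> ncomp f 1 (k * q) ` V"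
    using q(3) by (rule image_mono)
  ultimately show ?thesis
    using q(1) by blast
qed

lemma cell_return_bounded:
  assumes "0 < e" "expands_by (2 * e)"
  shows "\<exists>M. \<forall>j\<in>unit_cells e. \<exists>q. 1 \<le> q \<and> q \<le> M \<and>
           (\<exists>i\<in>unit_cells e. cell e i \<subseteq> ncomp f 1 (k * q) ` cell e j)"
proof -
  have "\<forall>j\<in>unit_cells e. \<exists>q. 1 \<le> q \<and> (\<exists>i\<in>unit_cells e. cell e i \<subseteq> ncomp f 1 (k * q) ` cell e j)"
  proof
    fix j assume j: "j \<in> unit_cells e"
    define I where "I = {real j * e<..<(real j + 1) * e}"
    obtain q i where "1 \<le> q" "i \<in> unit_cells e" "cell e i \<subseteq> ncomp f 1 (k * q) ` I"
      using expands_by_covers_unit_cell[OF assms nopen01_cell_interior[OF assms(1) j]]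
      unfolding I_def by blast
    moreover have "ncomp f 1 (k * q) ` I \<subseteq> ncomp f 1 (k * q) ` cell e j"
      by (intro image_mono) (auto simp: I_def cell_def)
    ultimately show "\<exists>q. 1 \<le> q \<and> (\<exists>i\<in>unit_cells e. cell e i \<subseteq> ncomp f 1 (k * q) ` cell e j)"
      by blast
  qed
  then obtain q where q: "\<forall>j\<in>unit_cells e. 1 \<le> q j \<and>
      (\<exists>i\<in>unit_cells e. cell e i \<subseteq> ncomp f 1 (k * q j) ` cell e j)"
    by (rule bchoice[THEN exE])
  show ?thesis
  proof (rule exI[of _ "Max (q ` unit_cells e)"], intro ballI)
    fix j assume "j \<in> unit_cells e"
    then have "q j \<le> Max (q ` unit_cells e)"
      using finite_unit_cells[OF assms(1)] by simp
    with q \<open>j \<in> unit_cells e\<close> show "\<exists>q'. 1 \<le> q' \<and> q' \<le> Max (q ` unit_cells e) \<and>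
        (\<exists>i\<in>unit_cells e. cell e i \<subseteq> ncomp f 1 (k * q') ` cell e j)"
      by blast
  qed
qed

lemma covered_cells_recur:
  assumes M: "\<forall>j\<in>unit_cells e. \<exists>q. 1 \<le> q \<and> q \<le> M \<and>
      (\<exists>i\<in>unit_cells e. cell e i \<subseteq> ncomp f 1 (k * q) ` cell e j)"
    and start: "j\<^sub>0 \<in> unit_cells e" "cell e j\<^sub>0 \<subseteq> ncomp f 1 (k * q\<^sub>0) ` U"
    and n: "k * q\<^sub>0 \<le> n"
  shows "\<exists>c. k * c \<le> n \<and> n < k * c + M * k \<and>
           (\<exists>j\<in>unit_cells e. cell e j \<subseteq> ncomp f 1 (k * c) ` U)"
proof -
  define R where "R t \<longleftrightarrow> (\<exists>c. t = k * c \<and> (\<exists>j\<in>unit_cells e. cell e j \<subseteq> ncomp f 1 t ` U))" for t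
  have gap: "\<exists>t'. R t' \<and> t < t' \<and> t' \<le> t + M * k" if "R t" for t
  proof -
    obtain c j where t: "t = k * c" "j \<in> unit_cells e" "cell e j \<subseteq> ncomp f 1 t ` U"
      using \<open>R t\<close> unfolding R_def by blast
    then obtain q i where q: "1 \<le> q" "q \<le> M" "i \<in> unit_cells e"
      "cell e i \<subseteq> ncomp f 1 (k * q) ` cell e j"
      using M by blast
    have "cell e i \<subseteq> ncomp f 1 (k * q) ` ncomp f 1 t ` U"
      using q(4) image_mono[OF t(3)] by (rule order_trans)
    also have "\<dots> = ncomp f 1 (k * (c + q)) ` U"
      using ncomp_period_split[of c "k * q"] t(1) by (simp add: image_comp algebra_simps)
    finally have "R (k * (c + q))"
      using q(3) unfolding R_def by blast
    moreover have "t < k * (c + q)" "k * (c + q) \<le> t + M * k"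
      using t(1) q(1) period_pos mult_le_mono2[OF q(2), of k] by (simp_all add: algebra_simps)
    ultimately show ?thesis
      by blast
  qed
  have "R (k * q\<^sub>0)"
    using start unfolding R_def by blast
  then obtain t where "R t" "t \<le> n" "n < t + M * k"
    using bounded_gaps_cover[OF _ gap n] by blast
  then show ?thesis
    unfolding R_def by blast
qed

end

locale sensitive_periodic_system = sensitive_interval_system + periodic_interval_system
begin

lemma ex_expands_by: "\<exists>d>0. expands_by d"
proof -
  obtain d where d: "0 < d"
    "\<And>s x y. s < k \<Longrightarrow> x \<in> {0..1} \<Longrightarrow> y \<in> {0..1} \<Longrightarrow> dist x y < d \<Longrightarrow>
       dist (ncomp f 1 s x) (ncomp f 1 s y) < \<delta>"
    using ncomp_equicontinuous[OF sensitivity_pos, of k] by auto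
  have "expands_by d"
    unfolding expands_by_def
  proof (intro allI impI)
    fix V assume "nopen01 V"
    then obtain n u v where n: "k \<le> n" "u \<le> v" "{u..v} \<subseteq> V"
      and sep: "\<delta> < dist (ncomp f 1 n u) (ncomp f 1 n v)"
      using sensitive_at_late_times by blast
    define q s where "q = n div k" and "s = n mod k"
    have "n = k * q + s"
      by (simp add: q_def s_def)
    have "s < k"
      using period_pos by (simp add: s_def)
    have "0 < q"
      using period_pos n(1) by (simp add: q_def div_greater_zero_iff)
    have "{u..v} \<subseteq> {0..1}"
      using n(3) nopen01_subset[OF \<open>nopen01 V\<close>] by blast
    then have "u \<in> {0..1}" "v \<in> {0..1}"
      using n(2) by auto
    have "d \<le> dist (ncomp f 1 (k * q) u) (ncomp f 1 (k * q) v)"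
    proof (rule ccontr)
      assume "\<not> ?thesis"
      then have "dist (ncomp f 1 s (ncomp f 1 (k * q) u)) (ncomp f 1 s (ncomp f 1 (k * q) v)) < \<delta>"
        using d(2) \<open>s < k\<close> ncomp_in_unit \<open>u \<in> {0..1}\<close> \<open>v \<in> {0..1}\<close> by simp
      then show False
        using sep ncomp_period_split[of q s] \<open>n = k * q + s\<close> by simp
    qed
    then show "\<exists>q\<ge>1. \<exists>u v. u \<le> v \<and> {u..v} \<subseteq> V \<and>
                 d \<le> dist (ncomp f 1 (k * q) u) (ncomp f 1 (k * q) v)"
      using \<open>0 < q\<close> n(2,3) by (auto simp: Suc_le_eq)
  qed
  with d(1) show ?thesis
    by blast
qed

theorem cofinitely_sensitive: "cofinitely_sensitive f"
proof -
  obtain d where "0 < d" "expands_by d"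
    using ex_expands_by by blast
  define e where "e = d / 2"
  have "0 < e" "expands_by (2 * e)"
    using \<open>0 < d\<close> \<open>expands_by d\<close> by (simp_all add: e_def)
  obtain M where M: "\<forall>j\<in>unit_cells e. \<exists>q. 1 \<le> q \<and> q \<le> M \<and>
      (\<exists>i\<in>unit_cells e. cell e i \<subseteq> ncomp f 1 (k * q) ` cell e j)"
    using cell_return_bounded[OF \<open>0 < e\<close> \<open>expands_by (2 * e)\<close>] by blast
  obtain \<eta> where "0 < \<eta>" and spread: "\<forall>j\<in>unit_cells e. \<forall>m<M * k.
      \<exists>x\<in>cell e j. \<exists>y\<in>cell e j. \<eta> < dist (ncomp f 1 m x) (ncomp f 1 m y)"
    using cells_uniformly_spread[OF \<open>0 < e\<close>] by blast
  have "\<forall>\<^sub>F n in sequentially. n \<in> Nset f U \<eta>" if U: "nopen01 U" for U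
  proof -
    obtain q\<^sub>0 j\<^sub>0 where "1 \<le> q\<^sub>0" "j\<^sub>0 \<in> unit_cells e" "cell e j\<^sub>0 \<subseteq> ncomp f 1 (k * q\<^sub>0) ` U"
      using expands_by_covers_unit_cell[OF \<open>0 < e\<close> \<open>expands_by (2 * e)\<close> U] by blast
    have "n \<in> Nset f U \<eta>" if n: "k * q\<^sub>0 \<le> n" for n
    proof -
      obtain c j where c: "k * c \<le> n" "n < k * c + M * k"
        and j: "j \<in> unit_cells e" "cell e j \<subseteq> ncomp f 1 (k * c) ` U"
        using covered_cells_recur[OF M \<open>j\<^sub>0 \<in> unit_cells e\<close> \<open>cell e j\<^sub>0 \<subseteq> _\<close> n] by blast
      have "n - k * c < M * k"
        using c by simp
      then obtain x y where xy: "x \<in> cell e j" "y \<in> cell e j"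
        "\<eta> < dist (ncomp f 1 (n - k * c) x) (ncomp f 1 (n - k * c) y)"
        using spread j(1) by blast
      then obtain u v where "u \<in> U" "v \<in> U" "x = ncomp f 1 (k * c) u" "y = ncomp f 1 (k * c) v"
        using j(2) by blast
      moreover have "ncomp f 1 n = ncomp f 1 (n - k * c) \<circ> ncomp f 1 (k * c)"
        using ncomp_period_split[of c "n - k * c"] c(1) by simp
      ultimately have "\<eta> < dist (ncomp f 1 n u) (ncomp f 1 n v)"
        using xy(3) by simp
      moreover have "1 \<le> k * q\<^sub>0"
        using period_pos \<open>1 \<le> q\<^sub>0\<close> by simp
      then have "1 \<le> n"
        using n by linarith
      ultimately show ?thesis
        unfolding Nset_def using \<open>u \<in> U\<close> \<open>v \<in> U\<close> by blast
    qed
    then show ?thesis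
      unfolding eventually_sequentially by blast
  qed
  with \<open>0 < \<eta>\<close> show ?thesis
    unfolding cofinitely_sensitive_def by blast
qed

end

context periodic_interval_system
begin

lemma sensitive_imp_cofinitely_sensitive:
  assumes "sensitive f"
  shows "cofinitely_sensitive f"
proof -
  obtain \<delta> where "0 < \<delta>" "\<And>V. nopen01 V \<Longrightarrow> Nset f V \<delta> \<noteq> {}"
    using assms unfolding sensitive_def by blast
  then interpret sensitive_periodic_system f \<delta> k
    by unfold_locales
  show ?thesis
    by (rule cofinitely_sensitive)
qed

end

theorem mainTheorem2:
  fixes f :: "nat \<Rightarrow> real \<Rightarrow> real"
  assumes cont: "\<And>n. n \<ge> 1 \<Longrightarrow> continuous_on {0..1} (f n)"
      and maps: "\<And>n. n \<ge> 1 \<Longrightarrow> f n ` {0..1} \<subseteq> {0..1}"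
      and periodic: "\<exists>k\<ge>1. \<forall>l j. 1 \<le> j \<and> j \<le> k \<longrightarrow> f (j + k * l) = f j"
  shows "(strongly_multi_sensitive f \<longleftrightarrow> N_sensitive f)
       \<and> (N_sensitive f \<longleftrightarrow> multi_sensitive f)
       \<and> (multi_sensitive f \<longleftrightarrow> sensitive f)"
proof -
  obtain k where "1 \<le> k" "\<forall>l j. 1 \<le> j \<and> j \<le> k \<longrightarrow> f (j + k * l) = f j"
    using periodic by blast
  then interpret periodic_interval_system f k
    using cont maps by unfold_locales
  have "sensitive f \<longleftrightarrow> cofinitely_sensitive f"
    using sensitive_imp_cofinitely_sensitive cofinitely_sensitive_imp_multi_sensitive
      multi_sensitive_imp_sensitive by blast
  moreover have "strongly_multi_sensitive f \<longleftrightarrow> sensitive f"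
    using calculation cofinitely_sensitive_imp_strongly_multi_sensitive
      strongly_multi_sensitive_imp_sensitive by blast
  moreover have "N_sensitive f \<longleftrightarrow> sensitive f"
    using calculation cofinitely_sensitive_imp_N_sensitive N_sensitive_imp_sensitive by blast
  moreover have "multi_sensitive f \<longleftrightarrow> sensitive f"
    using calculation cofinitely_sensitive_imp_multi_sensitive multi_sensitive_imp_sensitive by blast
  ultimately show ?thesis
    by simp
qed

end
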